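(* Let $n\ge2$, let $I$ be an ideal of $\Phi_{A_{n-1}}$ such that $I^c$ is full, let $\mathcal{A}_I=\{\{x\in\mathbb{R}^n:x_i-x_j=0\}: e_i-e_j\in I^c\}$, let $A^{(1)}|\dots|A^{(r)}$ be the partition of $[n]$ in accordance with $I$, and let $R^{(u)}=\{v\in\{u+1,\dots,r\}: s_I(A^{(u)})\cap s_I(A^{(v)})\ne\emptyset\}$. Then for every odd prime $p$, $$\bar\chi_{\mathcal{A}_I}(p,t)=\frac1p\sum_{(a^{(u)}_s)}\ \prod_{u=1}^r\binom{\#A^{(u)}}{a^{(u)}_1,\dots,a^{(u)}_p}\ \cdot\ t^{\sum_{u=1}^r\sum_{s=1}^p\left(\binom{a^{(u)}_s}{2}+a^{(u)}_s\sum_{v\in R^{(u)}}a^{(v)}_s\right)},$$ where the sum runs over all families of nonnegative integers $(a^{(u)}_s)_{u\in[r],\,s\in[p]}$ with $a^{(u)}_1+\dots+a^{(u)}_p=\#A^{(u)}$ for each $u\in[r]$.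
   Context: $\Phi^+_{A_{n-1}}=\{e_i-e_j:1\le i<j\le n\}$ with simple roots $e_i-e_{i+1}$, $i\in[n-1]$. The partial order $\preceq$: $e_i-e_j\preceq e_{i'}-e_{j'}$ iff $i'\le i$ and $j\le j'$. An ideal is a subset $I\subseteq\Phi^+_{A_{n-1}}$ with $u\in I$, $u\preceq v\Rightarrow v\in I$; $I^c=\Phi^+_{A_{n-1}}\setminus I$. $I^c$ is full if it contains every simple root. Let $e_{i_1}-e_{j_1},\dots,e_{i_k}-e_{j_k}$ be the maximal elements of $I^c$. The signature of $u\in[n]$ is $s_I(u)=\{l\in[k]: i_l\le u\le j_l\}$. The partition of $[n]$ in accordance with $I$ is the partition $A^{(1)}|\dots|A^{(r)}$ into the maximal nonempty subsets on which $s_I$ is constant, indexed so that $\min A^{(1)}<\dots<\min A^{(r)}$; $s_I(A^{(u)})$ is the common value of $s_I$ on $A^{(u)}$. For a subarrangement $\mathcal{B}$, $\mathrm{r}(\mathcal{B})=n-\dim\bigcap\mathcal{B}$ (with $\bigcap\emptyset=\mathbb{R}^n$). The coboundary polynomial is $\bar\chi_{\mathcal{A}}(q,t)=\sum_{\mathcal{B}\subseteq\mathcal{A}}q^{\mathrm{r}(\mathcal{A})-\mathrm{r}(\mathcal{B})}(t-1)^{\#\mathcal{B}}$. *)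

theory Defs
  imports Complex_Main HOL.Vector_Spaces "HOL-Library.Function_Algebras" "HOL-Library.FuncSet" "HOL-Computational_Algebra.Primes"
begin

text \<open>Positive roots e_i - e_j of A_{n-1}, encoded as pairs (i,j) with 1 <= i < j <= n.\<close>
definition posroots :: "nat \<Rightarrow> (nat \<times> nat) set" where
  "posroots n = {(i, j). 1 \<le> i \<and> i < j \<and> j \<le> n}"

definition root_le :: "nat \<times> nat \<Rightarrow> nat \<times> nat \<Rightarrow> bool" where
  "root_le u v \<longleftrightarrow> fst v \<le> fst u \<and> snd u \<le> snd v"

definition is_ideal :: "nat \<Rightarrow> (nat \<times> nat) set \<Rightarrow> bool" where
  "is_ideal n I \<longleftrightarrow> I \<subseteq> posroots n \<and>
     (\<forall>u\<in>I. \<forall>v\<in>posroots n. root_le u v \<longrightarrow> v \<in> I)"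

definition compl_ideal :: "nat \<Rightarrow> (nat \<times> nat) set \<Rightarrow> (nat \<times> nat) set" where
  "compl_ideal n I = posroots n - I"

definition is_full :: "nat \<Rightarrow> (nat \<times> nat) set \<Rightarrow> bool" where
  "is_full n I \<longleftrightarrow> (\<forall>i\<in>{1..<n}. (i, i + 1) \<in> compl_ideal n I)"

definition max_compl :: "nat \<Rightarrow> (nat \<times> nat) set \<Rightarrow> (nat \<times> nat) set" where
  "max_compl n I = {u \<in> compl_ideal n I. \<forall>v\<in>compl_ideal n I. root_le u v \<longrightarrow> v = u}"

text \<open>Signature of w: the maximal elements e_i - e_j of I^c with i <= w <= j
  (identified with themselves rather than with their index l in [k]).\<close>
definition signature :: "nat \<Rightarrow> (nat \<times> nat) set \<Rightarrow> nat \<Rightarrow> (nat \<times> nat) set" where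
  "signature n I w = {(i, j) \<in> max_compl n I. i \<le> w \<and> w \<le> j}"

text \<open>Blocks of the partition of [n] in accordance with I: the maximal
  nonempty subsets of [n] on which the signature is constant.\<close>
definition blocks :: "nat \<Rightarrow> (nat \<times> nat) set \<Rightarrow> nat set set" where
  "blocks n I = (\<lambda>w. {w' \<in> {1..n}. signature n I w' = signature n I w}) ` {1..n}"

definition block_sig :: "nat \<Rightarrow> (nat \<times> nat) set \<Rightarrow> nat set \<Rightarrow> (nat \<times> nat) set" where
  "block_sig n I B = signature n I (Min B)"

text \<open>R^{(u)}: blocks coming later (larger minimum) whose signature meets that of B.\<close>
definition later_blocks :: "nat \<Rightarrow> (nat \<times> nat) set \<Rightarrow> nat set \<Rightarrow> nat set set" where
  "later_blocks n I B = {C \<in> blocks n I. Min B < Min C \<and>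
      block_sig n I B \<inter> block_sig n I C \<noteq> {}}"

text \<open>R^n modelled as real functions on nat supported in {1..n}.\<close>
definition ambient :: "nat \<Rightarrow> (nat \<Rightarrow> real) set" where
  "ambient n = {x. \<forall>k. k \<notin> {1..n} \<longrightarrow> x k = 0}"

definition hyperplane :: "nat \<Rightarrow> nat \<Rightarrow> nat \<Rightarrow> (nat \<Rightarrow> real) set" where
  "hyperplane n i j = {x \<in> ambient n. x i - x j = 0}"

definition fscale :: "real \<Rightarrow> (nat \<Rightarrow> real) \<Rightarrow> (nat \<Rightarrow> real)" where
  "fscale c x = (\<lambda>k. c * x k)"

definition vdim :: "(nat \<Rightarrow> real) set \<Rightarrow> nat" where
  "vdim S = vector_space.dim fscale S"

text \<open>Rank r(B) = n - dim (intersection of B), intersection of the empty family = R^n.\<close>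
definition arr_rank :: "nat \<Rightarrow> (nat \<Rightarrow> real) set set \<Rightarrow> nat" where
  "arr_rank n B = n - vdim (ambient n \<inter> \<Inter>B)"

definition coboundary :: "nat \<Rightarrow> (nat \<Rightarrow> real) set set \<Rightarrow> real \<Rightarrow> real \<Rightarrow> real" where
  "coboundary n A q t = (\<Sum>B\<in>Pow A. q ^ (arr_rank n A - arr_rank n B) * (t - 1) ^ card B)"

definition arrangement_of :: "nat \<Rightarrow> (nat \<times> nat) set \<Rightarrow> (nat \<Rightarrow> real) set set" where
  "arrangement_of n I = (\<lambda>(i, j). hyperplane n i j) ` compl_ideal n I"

definition multinomial :: "nat \<Rightarrow> nat \<Rightarrow> (nat \<Rightarrow> nat) \<Rightarrow> nat" where
  "multinomial p m a = fact m div (\<Prod>s\<in>{1..p}. fact (a s))"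

definition families :: "nat \<Rightarrow> (nat \<times> nat) set \<Rightarrow> nat \<Rightarrow> (nat set \<Rightarrow> nat \<Rightarrow> nat) set" where
  "families n I p = (\<Pi>\<^sub>E B\<in>blocks n I.
      {f \<in> {1..p} \<rightarrow>\<^sub>E {0..card B}. (\<Sum>s\<in>{1..p}. f s) = card B})"

definition exponent :: "nat \<Rightarrow> (nat \<times> nat) set \<Rightarrow> nat \<Rightarrow> (nat set \<Rightarrow> nat \<Rightarrow> nat) \<Rightarrow> nat" where
  "exponent n I p a = (\<Sum>B\<in>blocks n I. \<Sum>s\<in>{1..p}.
      (a B s choose 2) + a B s * (\<Sum>C\<in>later_blocks n I B. a C s))"

end

theory Submission
  imports Defs "HOL-Library.Indicator_Function"
begin

text \<open>
  The hyperplanes \<open>x\<^sub>i = x\<^sub>j\<close> with \<open>e\<^sub>i - e\<^sub>j \<in> I\<^sup>c\<close> form the graphic arrangement of the graph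
  on \<open>[n]\<close> with edge set \<open>I\<^sup>c\<close>, which is connected because \<open>I\<^sup>c\<close> is full. The rank of a
  subset \<open>F\<close> of edges is \<open>n - c(F)\<close>, where \<open>c(F)\<close> is the number of components of \<open>F\<close>, and
  \<open>p\<^bsup>c(F)\<^esup>\<close> counts the colorings \<open>[n] \<rightarrow> [p]\<close> that are constant on these components.
  Exchanging the two sums turns the coboundary polynomial into \<open>1/p\<close> times the sum over all
  colorings \<open>f\<close> of \<open>t\<close> to the number of edges of \<open>I\<^sup>c\<close> monochromatic under \<open>f\<close>.

  Next, \<open>e\<^sub>i - e\<^sub>j \<in> I\<^sup>c\<close> iff \<open>s\<^sub>I(i) \<inter> s\<^sub>I(j) \<noteq> {}\<close>, and when \<open>I\<^sup>c\<close> is full the blocks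
  \<open>A\<^sup>(\<^sup>u\<^sup>)\<close> are intervals. So the edges of \<open>I\<^sup>c\<close> are the pairs inside a block together
  with the pairs joining \<open>A\<^sup>(\<^sup>u\<^sup>)\<close> to a block in \<open>R\<^sup>(\<^sup>u\<^sup>)\<close>, and the number of monochromatic
  edges depends only on the numbers \<open>a\<^sup>(\<^sup>u\<^sup>)\<^sub>s\<close> of points of color \<open>s\<close> in \<open>A\<^sup>(\<^sup>u\<^sup>)\<close>; the
  colorings with prescribed numbers are counted by the product of multinomial coefficients.
\<close>

section \<open>Functions constant on the classes of an equivalence relation\<close>

interpretation rvec: vector_space fscale
  by unfold_locales (auto simp: fscale_def algebra_simps fun_eq_iff)

lemma sum_fun_apply: "(sum g A) k = (\<Sum>c\<in>A. (g c k :: 'b::comm_monoid_add))"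
  by (induction A rule: infinite_finite_induct) auto

lemma class_of_member:
  assumes "equiv S R" and "B \<in> S // R" and "w \<in> B"
  shows "R `` {w} = B"
  using assms by (metis Image_singleton_iff equiv_class_eq quotientE)

lemma sum_scale_indicator_quotient_apply:
  assumes eq: "equiv S R" and fin: "finite S"
  shows "(\<Sum>c\<in>S // R. fscale (g c) (indicator c)) k = (if k \<in> S then g (R `` {k}) else (0 :: real))"
proof (cases "k \<in> S")
  case True
  have "(\<Sum>c\<in>S // R. g c * indicator c k) = (\<Sum>c\<in>{R `` {k}}. g c * indicator c k)"
  proof (rule sum.mono_neutral_right)
    show "finite (S // R)"
      using eq fin by (simp add: finite_quotient equiv_type)
    show "\<forall>c\<in>S // R - {R `` {k}}. g c * indicator c k = 0"
      using class_of_member[OF eq] by (auto simp: indicator_def)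
  qed (use True in \<open>auto intro: quotientI\<close>)
  then show ?thesis
    using equiv_class_self[OF eq True] True by (simp add: sum_fun_apply fscale_def)
next
  case False
  then have "\<forall>c\<in>S // R. k \<notin> c"
    using eq in_quotient_imp_subset by blast
  then show ?thesis
    using False by (simp add: sum_fun_apply fscale_def)
qed

lemma dim_functions_constant_on_classes:
  assumes eq: "equiv S R" and fin: "finite S"
  shows "vdim {x. (\<forall>k. k \<notin> S \<longrightarrow> x k = 0) \<and> (\<forall>(i, j)\<in>R. x i = x j)} = card (S // R)"
    (is "vdim ?V = _")
proof -
  let ?Q = "S // R" and ?ind = "indicator :: nat set \<Rightarrow> nat \<Rightarrow> real"
  have finQ: "finite ?Q"
    using eq fin by (simp add: finite_quotient equiv_type)
  have subS: "c \<subseteq> S" if "c \<in> ?Q" for c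
    using eq that by (rule in_quotient_imp_subset)
  have inj: "inj_on ?ind ?Q"
    by (rule inj_onI) (metis indicator_eq_0_iff subsetI subset_antisym zero_neq_one)
  note eval = sum_scale_indicator_quotient_apply[OF eq fin]
  show ?thesis
    unfolding vdim_def
  proof (rule rvec.dim_unique)
    show "?ind ` ?Q \<subseteq> ?V"
    proof clarify
      fix c assume c: "c \<in> ?Q"
      have "i \<in> c \<longleftrightarrow> j \<in> c" if "(i, j) \<in> R" for i j
        using class_of_member[OF eq c] equiv_class_eq[OF eq that] that eq
        by (metis Image_singleton_iff equiv_class_eq_iff)
      then show "(\<forall>k. k \<notin> S \<longrightarrow> ?ind c k = 0) \<and> (\<forall>(i, j)\<in>R. ?ind c i = ?ind c j)"
        using subS[OF c] by (auto simp: indicator_def)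
    qed
    show "card (?ind ` ?Q) = card ?Q"
      using inj by (rule card_image)
    show "?V \<subseteq> rvec.span (?ind ` ?Q)"
    proof
      fix x assume x: "x \<in> ?V"
      have "x = (\<Sum>c\<in>?Q. fscale (x (SOME k. k \<in> c)) (?ind c))"
      proof
        fix k
        show "x k = (\<Sum>c\<in>?Q. fscale (x (SOME k. k \<in> c)) (?ind c)) k"
        proof (cases "k \<in> S")
          case True
          then have "(k, SOME k'. k' \<in> R `` {k}) \<in> R"
            using someI[of "\<lambda>k'. k' \<in> R `` {k}"] equiv_class_self[OF eq True] by blast
          then show ?thesis
            using x True by (auto simp: eval)
        qed (use x in \<open>simp add: eval\<close>)
      qed
      also have "\<dots> \<in> rvec.span (?ind ` ?Q)"
        by (intro rvec.span_sum rvec.span_scale rvec.span_base) auto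
      finally show "x \<in> rvec.span (?ind ` ?Q)" .
    qed
    show "rvec.independent (?ind ` ?Q)"
    proof (rule rvec.independent_if_scalars_zero)
      fix f b
      assume zero: "(\<Sum>b\<in>?ind ` ?Q. fscale (f b) b) = 0" and b: "b \<in> ?ind ` ?Q"
      then obtain c where c: "c \<in> ?Q" "b = ?ind c" by auto
      obtain k where k: "k \<in> c"
        using c eq in_quotient_imp_non_empty by blast
      have "0 = (\<Sum>c\<in>?Q. fscale (f (?ind c)) (?ind c)) k"
        using zero by (simp add: sum.reindex[OF inj])
      also have "\<dots> = f b"
        using eval class_of_member[OF eq c(1) k] subS[OF c(1)] k c(2) by auto
      finally show "f b = 0" by simp
    qed (use finQ in simp)
  qed
qed

lemma card_PiE_restrict_quotient:
  assumes eq: "equiv S R" and fin: "finite S"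
  shows "card {f \<in> S \<rightarrow>\<^sub>E T. \<forall>B\<in>S // R. P B (restrict f B)}
    = (\<Prod>B\<in>S // R. card {g \<in> B \<rightarrow>\<^sub>E T. P B g})"
proof -
  let ?Q = "S // R"
  have sub: "B \<subseteq> S" if "B \<in> ?Q" for B
    using eq that by (rule in_quotient_imp_subset)
  have cls: "R `` {k} \<in> ?Q" "k \<in> R `` {k}" if "k \<in> S" for k
    using that equiv_class_self[OF eq] by (auto intro: quotientI)
  have "bij_betw (\<lambda>f. \<lambda>B\<in>?Q. restrict f B) {f \<in> S \<rightarrow>\<^sub>E T. \<forall>B\<in>?Q. P B (restrict f B)}
      (\<Pi>\<^sub>E B\<in>?Q. {g \<in> B \<rightarrow>\<^sub>E T. P B g})"
  proof (rule bij_betwI')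
    fix f1 f2
    assume f: "f1 \<in> {f \<in> S \<rightarrow>\<^sub>E T. \<forall>B\<in>?Q. P B (restrict f B)}"
      "f2 \<in> {f \<in> S \<rightarrow>\<^sub>E T. \<forall>B\<in>?Q. P B (restrict f B)}"
    show "((\<lambda>B\<in>?Q. restrict f1 B) = (\<lambda>B\<in>?Q. restrict f2 B)) = (f1 = f2)"
    proof
      assume e: "(\<lambda>B\<in>?Q. restrict f1 B) = (\<lambda>B\<in>?Q. restrict f2 B)"
      show "f1 = f2"
      proof
        fix k
        show "f1 k = f2 k"
        proof (cases "k \<in> S")
          case True
          then show ?thesis
            using fun_cong[OF fun_cong[OF e, of "R `` {k}"], of k] cls by simp
        qed (use f in \<open>auto simp: PiE_def extensional_def\<close>)
      qed
    qed simp
  next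
    fix f
    assume f: "f \<in> {f \<in> S \<rightarrow>\<^sub>E T. \<forall>B\<in>?Q. P B (restrict f B)}"
    have "restrict f B \<in> B \<rightarrow>\<^sub>E T" if "B \<in> ?Q" for B
      using f sub[OF that] by auto
    then show "(\<lambda>B\<in>?Q. restrict f B) \<in> (\<Pi>\<^sub>E B\<in>?Q. {g \<in> B \<rightarrow>\<^sub>E T. P B g})"
      using f by (auto simp: restrict_PiE_iff)
  next
    fix F
    assume F: "F \<in> (\<Pi>\<^sub>E B\<in>?Q. {g \<in> B \<rightarrow>\<^sub>E T. P B g})"
    define f where "f k = (if k \<in> S then F (R `` {k}) k else undefined)" for k
    have restrict_f: "restrict f B = F B" if B: "B \<in> ?Q" for B
    proof
      fix w
      show "restrict f B w = F B w"
        using class_of_member[OF eq B, of w] sub[OF B] PiE_mem[OF F B]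
        by (cases "w \<in> B") (auto simp: f_def PiE_def extensional_def)
    qed
    have "f \<in> S \<rightarrow>\<^sub>E T"
      using F cls by (auto simp: f_def PiE_def Pi_def extensional_def)
    moreover have "F = (\<lambda>B\<in>?Q. restrict f B)"
      using F restrict_f by (auto simp: PiE_def extensional_def)
    moreover have "\<forall>B\<in>?Q. P B (restrict f B)"
      using F restrict_f by auto
    ultimately show "\<exists>f\<in>{f \<in> S \<rightarrow>\<^sub>E T. \<forall>B\<in>?Q. P B (restrict f B)}. F = (\<lambda>B\<in>?Q. restrict f B)"
      by blast
  qed
  then show ?thesis
    using eq fin by (simp add: bij_betw_same_card card_PiE finite_quotient equiv_type)
qed

lemma card_constant_functions:
  assumes "B \<noteq> {}"
  shows "card {g \<in> B \<rightarrow>\<^sub>E T. \<forall>i\<in>B. \<forall>j\<in>B. g i = g j} = card T"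
proof -
  obtain b where b: "b \<in> B"
    using assms by blast
  have "{g \<in> B \<rightarrow>\<^sub>E T. \<forall>i\<in>B. \<forall>j\<in>B. g i = g j} = (\<lambda>c. \<lambda>_\<in>B. c) ` T"
  proof (intro subset_antisym subsetI)
    fix g
    assume g: "g \<in> {g \<in> B \<rightarrow>\<^sub>E T. \<forall>i\<in>B. \<forall>j\<in>B. g i = g j}"
    then have gB: "g \<in> B \<rightarrow>\<^sub>E T" and const: "\<forall>i\<in>B. \<forall>j\<in>B. g i = g j"
      by blast+
    have "g = (\<lambda>_\<in>B. g b)"
    proof
      fix x
      show "g x = (\<lambda>_\<in>B. g b) x"
      proof (cases "x \<in> B")
        case True
        then show ?thesis
          using const b by (metis restrict_apply')
      next
        case False
        then show ?thesis
          using gB by (metis PiE_arb restrict_apply)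
      qed
    qed
    moreover have "g b \<in> T"
      using gB b by blast
    ultimately show "g \<in> (\<lambda>c. \<lambda>_\<in>B. c) ` T"
      by blast
  qed (auto simp: restrict_PiE_iff)
  moreover have "inj_on (\<lambda>c. \<lambda>_\<in>B. c) T"
    using b by (intro inj_onI) (metis restrict_apply')
  ultimately show ?thesis
    by (simp add: card_image)
qed

lemma card_functions_constant_on_classes:
  assumes eq: "equiv S R" and fin: "finite S"
  shows "card {f \<in> S \<rightarrow>\<^sub>E T. \<forall>(i, j)\<in>R. f i = f j} = card T ^ card (S // R)"
proof -
  have "(\<forall>(i, j)\<in>R. f i = f j) \<longleftrightarrow> (\<forall>B\<in>S // R. \<forall>i\<in>B. \<forall>j\<in>B. restrict f B i = restrict f B j)"
    for f :: "'a \<Rightarrow> 'b"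
  proof
    assume "\<forall>(i, j)\<in>R. f i = f j"
    then show "\<forall>B\<in>S // R. \<forall>i\<in>B. \<forall>j\<in>B. restrict f B i = restrict f B j"
      using in_quotient_imp_in_rel[OF eq]
      by (metis (mono_tags, lifting) case_prodD empty_subsetI insert_subset restrict_apply')
  next
    assume const: "\<forall>B\<in>S // R. \<forall>i\<in>B. \<forall>j\<in>B. restrict f B i = restrict f B j"
    show "\<forall>(i, j)\<in>R. f i = f j"
    proof clarify
      fix i j
      assume ij: "(i, j) \<in> R"
      then have "i \<in> S" "i \<in> R `` {i}" "j \<in> R `` {i}"
        using eq equiv_class_self[OF eq] by (auto simp: equiv_def refl_on_def)
      then show "f i = f j"
        using const quotientI[of i S R] by (metis restrict_apply')
    qed
  qed
  then have "card {f \<in> S \<rightarrow>\<^sub>E T. \<forall>(i, j)\<in>R. f i = f j}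
      = (\<Prod>B\<in>S // R. card {g \<in> B \<rightarrow>\<^sub>E T. \<forall>i\<in>B. \<forall>j\<in>B. g i = g j})"
    using card_PiE_restrict_quotient[OF eq fin, of T "\<lambda>B g. \<forall>i\<in>B. \<forall>j\<in>B. g i = g j"] by simp
  also have "\<dots> = card T ^ card (S // R)"
    using eq by (simp add: card_constant_functions in_quotient_imp_non_empty)
  finally show ?thesis .
qed

section \<open>The coboundary polynomial of a graphic arrangement\<close>

definition equiv_closure_on :: "'a set \<Rightarrow> ('a \<times> 'a) set \<Rightarrow> ('a \<times> 'a) set" where
  "equiv_closure_on S F = (F \<union> F\<inverse> \<union> Id_on S)\<^sup>+"

lemma equiv_equiv_closure_on:
  assumes "F \<subseteq> S \<times> S"
  shows "equiv S (equiv_closure_on S F)"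
proof -
  have "(F \<union> F\<inverse> \<union> Id_on S)\<^sup>+ \<subseteq> S \<times> S"
    using assms by (intro trancl_subset_Sigma) auto
  moreover have "sym ((F \<union> F\<inverse> \<union> Id_on S)\<^sup>+)"
    by (intro sym_trancl) (auto simp: sym_def)
  ultimately show ?thesis
    unfolding equiv_def equiv_closure_on_def refl_on_def by auto
qed

lemma constant_on_equiv_closure_on_iff:
  "(\<forall>(i, j)\<in>equiv_closure_on S F. x i = x j) \<longleftrightarrow> (\<forall>(i, j)\<in>F. x i = x j)"
proof
  assume "\<forall>(i, j)\<in>equiv_closure_on S F. x i = x j"
  then show "\<forall>(i, j)\<in>F. x i = x j"
    unfolding equiv_closure_on_def by auto
next
  assume F: "\<forall>(i, j)\<in>F. x i = x j"
  have "x a = x b" if "(a, b) \<in> (F \<union> F\<inverse> \<union> Id_on S)\<^sup>+" for a b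
    using that by (induction rule: trancl_induct) (use F in auto)
  then show "\<forall>(i, j)\<in>equiv_closure_on S F. x i = x j"
    unfolding equiv_closure_on_def by auto
qed

definition num_components :: "'a set \<Rightarrow> ('a \<times> 'a) set \<Rightarrow> nat" where
  "num_components S F = card (S // equiv_closure_on S F)"

lemma num_components_bounds:
  assumes "F \<subseteq> S \<times> S" and "finite S" and "S \<noteq> {}"
  shows "1 \<le> num_components S F" and "num_components S F \<le> card S"
proof -
  let ?R = "equiv_closure_on S F"
  have Q: "S // ?R = (\<lambda>k. ?R `` {k}) ` S"
    unfolding quotient_def by auto
  show "num_components S F \<le> card S"
    unfolding num_components_def Q using assms(2) by (rule card_image_le)
  show "1 \<le> num_components S F"
    unfolding num_components_def Q using assms(2,3) by (simp add: Suc_le_eq card_gt_0_iff)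
qed

definition monochromatic :: "('a \<Rightarrow> 'b) \<Rightarrow> ('a \<times> 'a) set \<Rightarrow> ('a \<times> 'a) set" where
  "monochromatic f E = {(i, j) \<in> E. f i = f j}"

lemma finite_monochromatic: "finite E \<Longrightarrow> finite (monochromatic f E)"
  unfolding monochromatic_def by (rule finite_subset[rotated]) auto

lemma sum_power_card_Pow:
  fixes x :: "'a::comm_semiring_1"
  assumes "finite M"
  shows "(\<Sum>F\<in>Pow M. x ^ card F) = (x + 1) ^ card M"
  using prod_add[OF assms, of "\<lambda>_. x" "\<lambda>_. 1"] by simp

lemma sum_subgraphs_eq_sum_colorings:
  fixes t :: real
  assumes S: "finite S" and T: "finite T" and E: "E \<subseteq> S \<times> S"
  shows "(\<Sum>F\<in>Pow E. real (card T) ^ num_components S F * (t - 1) ^ card F)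
    = (\<Sum>f\<in>S \<rightarrow>\<^sub>E T. t ^ card (monochromatic f E))"
proof -
  let ?W = "S \<rightarrow>\<^sub>E T"
  have finE: "finite E"
    using E S by (meson finite_SigmaI finite_subset)
  have colorings: "card T ^ num_components S F = card {f \<in> ?W. F \<subseteq> monochromatic f E}"
    if "F \<subseteq> E" for F
  proof -
    have "F \<subseteq> monochromatic f E \<longleftrightarrow> (\<forall>(i, j)\<in>equiv_closure_on S F. f i = f j)" for f
      using that by (auto simp: monochromatic_def constant_on_equiv_closure_on_iff)
    moreover have "F \<subseteq> S \<times> S"
      using that E by blast
    ultimately have "{f \<in> ?W. F \<subseteq> monochromatic f E} = {f \<in> ?W. \<forall>(i, j)\<in>equiv_closure_on S F. f i = f j}"
      and "card {f \<in> ?W. \<forall>(i, j)\<in>equiv_closure_on S F. f i = f j} = card T ^ num_components S F"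
      using card_functions_constant_on_classes[OF equiv_equiv_closure_on S, of F T]
      by (auto simp: num_components_def)
    then show ?thesis
      by simp
  qed
  have "(\<Sum>F\<in>Pow E. real (card T) ^ num_components S F * (t - 1) ^ card F)
      = (\<Sum>F\<in>Pow E. \<Sum>f\<in>{f \<in> ?W. F \<subseteq> monochromatic f E}. (t - 1) ^ card F)"
    by (intro sum.cong refl) (simp flip: colorings of_nat_power)
  also have "\<dots> = (\<Sum>f\<in>?W. \<Sum>F\<in>{F \<in> Pow E. F \<subseteq> monochromatic f E}. (t - 1) ^ card F)"
    by (rule sum.swap_restrict) (use finE S T in \<open>auto simp: finite_PiE\<close>)
  also have "\<dots> = (\<Sum>f\<in>?W. t ^ card (monochromatic f E))"
  proof (intro sum.cong refl)
    fix f
    have "{F \<in> Pow E. F \<subseteq> monochromatic f E} = Pow (monochromatic f E)"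
      by (auto simp: monochromatic_def)
    then show "(\<Sum>F\<in>{F \<in> Pow E. F \<subseteq> monochromatic f E}. (t - 1) ^ card F) = t ^ card (monochromatic f E)"
      using finE by (simp add: sum_power_card_Pow finite_monochromatic)
  qed
  finally show ?thesis .
qed

abbreviation root_hyperplane :: "nat \<Rightarrow> nat \<times> nat \<Rightarrow> (nat \<Rightarrow> real) set" where
  "root_hyperplane n \<equiv> \<lambda>(i, j). hyperplane n i j"

lemma posroots_subset: "posroots n \<subseteq> {1..n} \<times> {1..n}"
  by (auto simp: posroots_def)

lemma inj_on_root_hyperplane: "inj_on (root_hyperplane n) (posroots n)"
proof
  fix u v
  assume u: "u \<in> posroots n" and v: "v \<in> posroots n" and eq: "root_hyperplane n u = root_hyperplane n v"
  obtain i j where ij: "u = (i, j)" "1 \<le> i" "i < j" "j \<le> n"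
    using u by (auto simp: posroots_def)
  obtain i' j' where ij': "v = (i', j')" "1 \<le> i'" "i' < j'" "j' \<le> n"
    using v by (auto simp: posroots_def)
  have "a \<in> {i', j'}" if a: "a \<in> {i, j}" for a
  proof (rule ccontr)
    assume a': "a \<notin> {i', j'}"
    define x where "x = (\<lambda>k. if k = a then 1 else (0::real))"
    have "x \<in> ambient n"
      using a ij by (auto simp: x_def ambient_def)
    then have "x \<in> root_hyperplane n v"
      using a' by (simp add: ij' hyperplane_def x_def)
    moreover have "x \<notin> root_hyperplane n u"
      using a ij by (auto simp: hyperplane_def x_def)
    ultimately show False
      using eq by simp
  qed
  then have "i \<in> {i', j'}" "j \<in> {i', j'}"
    by auto
  then show "u = v"
    using ij ij' by auto
qed

lemma arr_rank_root_hyperplanes: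
  assumes F: "F \<subseteq> {1..n} \<times> {1..n}"
  shows "arr_rank n (root_hyperplane n ` F) = n - num_components {1..n} F"
proof -
  have "ambient n \<inter> \<Inter>(root_hyperplane n ` F)
      = {x. (\<forall>k. k \<notin> {1..n} \<longrightarrow> x k = 0) \<and> (\<forall>(i, j)\<in>F. x i = x j)}"
    by (auto simp: ambient_def hyperplane_def)
  also have "\<dots> = {x. (\<forall>k. k \<notin> {1..n} \<longrightarrow> x k = 0)
      \<and> (\<forall>(i, j)\<in>equiv_closure_on {1..n} F. x i = x j)}"
    by (simp only: constant_on_equiv_closure_on_iff)
  finally show ?thesis
    unfolding arr_rank_def num_components_def
    using dim_functions_constant_on_classes[OF equiv_equiv_closure_on[OF F]] by simp
qed

lemma coboundary_root_hyperplanes: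
  fixes q :: nat and t :: real
  assumes E: "E \<subseteq> posroots n" and connected: "num_components {1..n} E = 1" and q: "q \<ge> 1"
  shows "coboundary n (root_hyperplane n ` E) (real q) t
    = (1 / real q) * (\<Sum>f\<in>{1..n} \<rightarrow>\<^sub>E {1..q}. t ^ card (monochromatic f E))"
proof -
  let ?H = "root_hyperplane n"
  have ES: "E \<subseteq> {1..n} \<times> {1..n}"
    using E posroots_subset by blast
  have inj: "inj_on ?H E"
    using inj_on_root_hyperplane E by (rule inj_on_subset)
  have n: "{1..n} \<noteq> {}"
    using connected by (cases n) (auto simp: num_components_def)
  have exponent: "arr_rank n (?H ` E) - arr_rank n (?H ` F) = num_components {1..n} F - 1"
    if "F \<subseteq> E" for F
  proof -
    have "F \<subseteq> {1..n} \<times> {1..n}"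
      using that ES by blast
    then show ?thesis
      using arr_rank_root_hyperplanes[of F n] arr_rank_root_hyperplanes[OF ES] connected
        num_components_bounds[of F "{1..n}"] n by simp
  qed
  have "coboundary n (?H ` E) (real q) t
      = (\<Sum>F\<in>Pow E. real q ^ (arr_rank n (?H ` E) - arr_rank n (?H ` F)) * (t - 1) ^ card (?H ` F))"
    unfolding coboundary_def image_Pow_surj[OF refl, symmetric]
    using inj_on_image_Pow[OF inj] by (simp add: sum.reindex)
  also have "\<dots> = (\<Sum>F\<in>Pow E. (1 / real q) * (real (card {1..q}) ^ num_components {1..n} F * (t - 1) ^ card F))"
  proof (intro sum.cong refl)
    fix F assume F: "F \<in> Pow E"
    then have "1 \<le> num_components {1..n} F"
      using ES n num_components_bounds(1)[of F "{1..n}"] by auto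
    then have "real q ^ (num_components {1..n} F - 1) = (1 / real q) * real q ^ num_components {1..n} F"
      using q by (cases "num_components {1..n} F") auto
    then show "real q ^ (arr_rank n (?H ` E) - arr_rank n (?H ` F)) * (t - 1) ^ card (?H ` F)
        = (1 / real q) * (real (card {1..q}) ^ num_components {1..n} F * (t - 1) ^ card F)"
      using F exponent card_image[OF inj_on_subset[OF inj]] by simp
  qed
  also have "\<dots> = (1 / real q) * (\<Sum>f\<in>{1..n} \<rightarrow>\<^sub>E {1..q}. t ^ card (monochromatic f E))"
    unfolding sum_distrib_left[symmetric] by (subst sum_subgraphs_eq_sum_colorings[OF _ _ ES]) simp_all
  finally show ?thesis .
qed

section \<open>Multinomial coefficients count colorings\<close>

definition colorings_with_fiber_sizes :: "'a set \<Rightarrow> nat \<Rightarrow> (nat \<Rightarrow> nat) \<Rightarrow> ('a \<Rightarrow> nat) set" where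
  "colorings_with_fiber_sizes B p a =
     {g \<in> B \<rightarrow>\<^sub>E {1..p}. \<forall>s\<in>{1..p}. card {w \<in> B. g w = s} = a s}"

lemma finite_colorings_with_fiber_sizes:
  "finite B \<Longrightarrow> finite (colorings_with_fiber_sizes B p a)"
  unfolding colorings_with_fiber_sizes_def by (simp add: finite_PiE)

definition extend_coloring :: "'a set \<Rightarrow> 'a set \<Rightarrow> nat \<Rightarrow> ('a \<Rightarrow> nat) \<Rightarrow> 'a \<Rightarrow> nat" where
  "extend_coloring B T q h = (\<lambda>w\<in>B. if w \<in> T then q else h w)"

lemma extend_coloring_in_colorings_with_fiber_sizes:
  assumes T: "T \<subseteq> B" "card T = a (Suc p)" and h: "h \<in> colorings_with_fiber_sizes (B - T) p a"
  shows "extend_coloring B T (Suc p) h \<in> colorings_with_fiber_sizes B (Suc p) a"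
proof -
  let ?g = "extend_coloring B T (Suc p) h"
  have bounds: "1 \<le> h w \<and> h w \<le> p" if "w \<in> B - T" for w
    using h that by (auto simp: colorings_with_fiber_sizes_def)
  have g: "?g \<in> B \<rightarrow>\<^sub>E {1..Suc p}"
    using bounds by (auto simp: extend_coloring_def restrict_PiE_iff) (meson DiffI le_SucI)
  have fiber_top: "{w \<in> B. ?g w = Suc p} = T"
    using T bounds by (auto simp: extend_coloring_def) (metis DiffI Suc_n_not_le_n)+
  have "card {w \<in> B. ?g w = s} = a s" if s: "s \<in> {1..Suc p}" for s
  proof (cases "s = Suc p")
    case False
    then have "s \<in> {1..p}" and "{w \<in> B. ?g w = s} = {w \<in> B - T. h w = s}"
      using s by (auto simp: extend_coloring_def)
    then show ?thesis
      using h by (simp add: colorings_with_fiber_sizes_def)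
  qed (use fiber_top T in simp)
  then show ?thesis
    using g by (simp add: colorings_with_fiber_sizes_def)
qed

lemma bij_betw_colorings_with_fiber_sizes_Suc:
  "bij_betw (\<lambda>g. ({w \<in> B. g w = Suc p}, restrict g (B - {w \<in> B. g w = Suc p})))
     (colorings_with_fiber_sizes B (Suc p) a)
     (SIGMA T:{T. T \<subseteq> B \<and> card T = a (Suc p)}. colorings_with_fiber_sizes (B - T) p a)"
proof (rule bij_betwI[where g = "\<lambda>(T, h). extend_coloring B T (Suc p) h"])
  show "(\<lambda>g. ({w \<in> B. g w = Suc p}, restrict g (B - {w \<in> B. g w = Suc p})))
    \<in> colorings_with_fiber_sizes B (Suc p) a
      \<rightarrow> (SIGMA T:{T. T \<subseteq> B \<and> card T = a (Suc p)}. colorings_with_fiber_sizes (B - T) p a)"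
  proof
    fix g
    assume g: "g \<in> colorings_with_fiber_sizes B (Suc p) a"
    let ?T = "{w \<in> B. g w = Suc p}"
    have "restrict g (B - ?T) \<in> (B - ?T) \<rightarrow>\<^sub>E {1..p}"
      unfolding restrict_PiE_iff using g by (auto simp: colorings_with_fiber_sizes_def le_Suc_eq)
    moreover have "{w \<in> B - ?T. restrict g (B - ?T) w = s} = {w \<in> B. g w = s}" if "s \<in> {1..p}" for s
      using that by auto
    ultimately show "(?T, restrict g (B - ?T))
      \<in> (SIGMA T:{T. T \<subseteq> B \<and> card T = a (Suc p)}. colorings_with_fiber_sizes (B - T) p a)"
      using g by (auto simp: colorings_with_fiber_sizes_def)
  qed
  show "(\<lambda>(T, h). extend_coloring B T (Suc p) h)
    \<in> (SIGMA T:{T. T \<subseteq> B \<and> card T = a (Suc p)}. colorings_with_fiber_sizes (B - T) p a)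
      \<rightarrow> colorings_with_fiber_sizes B (Suc p) a"
  proof (rule Pi_I, clarify)
    fix T h
    assume "T \<subseteq> B" "card T = a (Suc p)" "h \<in> colorings_with_fiber_sizes (B - T) p a"
    then show "extend_coloring B T (Suc p) h \<in> colorings_with_fiber_sizes B (Suc p) a"
      by (rule extend_coloring_in_colorings_with_fiber_sizes)
  qed
next
  fix g
  assume "g \<in> colorings_with_fiber_sizes B (Suc p) a"
  then show "(\<lambda>(T, h). extend_coloring B T (Suc p) h)
      ({w \<in> B. g w = Suc p}, restrict g (B - {w \<in> B. g w = Suc p})) = g"
    by (auto simp: colorings_with_fiber_sizes_def extend_coloring_def PiE_iff extensional_def)
next
  fix Th
  assume "Th \<in> (SIGMA T:{T. T \<subseteq> B \<and> card T = a (Suc p)}. colorings_with_fiber_sizes (B - T) p a)"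
  then obtain T h where Th: "Th = (T, h)" and T: "T \<subseteq> B"
    and hB: "h \<in> (B - T) \<rightarrow>\<^sub>E {1..p}"
    by (auto simp: colorings_with_fiber_sizes_def)
  have "h w \<le> p" if "w \<in> B - T" for w
    using hB that by auto
  then have "{w \<in> B. extend_coloring B T (Suc p) h w = Suc p} = T"
    using T by (auto simp: extend_coloring_def) (metis DiffI Suc_n_not_le_n)+
  moreover have "restrict (extend_coloring B T (Suc p) h) (B - T) = h"
    using hB by (auto simp: extend_coloring_def PiE_iff extensional_def)
  ultimately show "(\<lambda>g. ({w \<in> B. g w = Suc p}, restrict g (B - {w \<in> B. g w = Suc p})))
      ((\<lambda>(T, h). extend_coloring B T (Suc p) h) Th) = Th"
    using Th by simp
qed

lemma card_colorings_with_fiber_sizes: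
  assumes "finite B" and "(\<Sum>s\<in>{1..p}. a s) = card B"
  shows "card (colorings_with_fiber_sizes B p a) * (\<Prod>s\<in>{1..p}. fact (a s)) = (fact (card B) :: nat)"
  using assms
proof (induction p arbitrary: B)
  case 0
  then have "colorings_with_fiber_sizes B 0 a = {\<lambda>_. undefined}"
    by (auto simp: colorings_with_fiber_sizes_def)
  then show ?case
    using "0" by simp
next
  case (Suc p)
  define k where "k = a (Suc p)"
  define P where "P = (\<Prod>s\<in>{1..p}. fact (a s) :: nat)"
  let ?Ts = "{T. T \<subseteq> B \<and> card T = k}"
  have sum_a: "(\<Sum>s\<in>{1..p}. a s) + k = card B"
    using Suc.prems by (simp add: k_def)
  have IH: "card (colorings_with_fiber_sizes (B - T) p a) * P = fact (card B - k)" if "T \<in> ?Ts" for T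
  proof -
    have "card (B - T) = card B - k"
      using that Suc.prems(1) by (auto simp: card_Diff_subset finite_subset)
    then show ?thesis
      using Suc.IH[of "B - T"] Suc.prems(1) sum_a by (simp add: P_def)
  qed
  have "card (colorings_with_fiber_sizes B (Suc p) a)
      = (\<Sum>T\<in>?Ts. card (colorings_with_fiber_sizes (B - T) p a))"
  proof -
    have "finite ?Ts"
      using Suc.prems(1) by (simp add: finite_subset[of _ "Pow B"] subset_eq)
    then show ?thesis
      unfolding bij_betw_same_card[OF bij_betw_colorings_with_fiber_sizes_Suc] k_def
      using Suc.prems(1) by (intro card_SigmaI) (auto intro: finite_colorings_with_fiber_sizes)
  qed
  then have "card (colorings_with_fiber_sizes B (Suc p) a) * P = (card B choose k) * fact (card B - k)"
    using IH Suc.prems(1) by (simp add: sum_distrib_right n_subsets)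
  then have "card (colorings_with_fiber_sizes B (Suc p) a) * (\<Prod>s\<in>{1..Suc p}. fact (a s))
      = (card B choose k) * fact (card B - k) * fact k"
    by (simp add: P_def k_def mult.assoc)
  also have "\<dots> = fact (card B)"
    using binomial_fact_lemma[of k "card B"] sum_a by (simp add: algebra_simps)
  finally show ?case .
qed

lemma multinomial_eq_card_colorings_with_fiber_sizes:
  assumes "finite B" and "(\<Sum>s\<in>{1..p}. a s) = card B"
  shows "multinomial p (card B) a = card (colorings_with_fiber_sizes B p a)"
  unfolding multinomial_def card_colorings_with_fiber_sizes[OF assms, symmetric]
  by (simp add: prod_pos)

section \<open>Signatures and blocks\<close>

lemma max_compl_subset: "max_compl n I \<subseteq> compl_ideal n I"
  by (auto simp: max_compl_def)

lemma finite_compl_ideal: "finite (compl_ideal n I)"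
  by (rule finite_subset[of _ "{1..n} \<times> {1..n}"]) (auto simp: compl_ideal_def posroots_def)

lemma exists_max_compl_above:
  assumes u: "u \<in> compl_ideal n I"
  shows "\<exists>v\<in>max_compl n I. root_le u v"
proof -
  let ?U = "{v \<in> compl_ideal n I. root_le u v}"
  have finU: "finite ?U"
    using finite_compl_ideal by (rule finite_subset[rotated]) auto
  have "u \<in> ?U"
    using u by (simp add: root_le_def)
  then have "(\<lambda>w. snd w - fst w) ` ?U \<noteq> {}"
    by blast
  \<comment> \<open>a root above \<open>u\<close> of maximal height \<open>j - i\<close> is maximal in \<open>I\<^sup>c\<close>\<close>
  then have "Max ((\<lambda>w. snd w - fst w) ` ?U) \<in> (\<lambda>w. snd w - fst w) ` ?U"
    using finU by (intro Max_in) simp_all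
  then obtain v where v: "v \<in> ?U" and "snd v - fst v = Max ((\<lambda>w. snd w - fst w) ` ?U)"
    by auto
  then have v_max: "snd w - fst w \<le> snd v - fst v" if "w \<in> ?U" for w
    using finU that by simp
  have "v \<in> max_compl n I"
    unfolding max_compl_def
  proof (intro CollectI conjI ballI impI)
    show "v \<in> compl_ideal n I"
      using v by simp
    fix w
    assume w: "w \<in> compl_ideal n I" "root_le v w"
    then have "snd w - fst w \<le> snd v - fst v"
      using v root_le_def by (intro v_max) auto
    moreover have "fst v < snd v"
      using v by (auto simp: compl_ideal_def posroots_def)
    ultimately show "w = v"
      using w(2) by (cases v, cases w) (auto simp: root_le_def)
  qed
  then show ?thesis
    using v by blast
qed

lemma compl_ideal_iff_signatures_meet:
  assumes ideal: "is_ideal n I"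
  shows "(i, j) \<in> compl_ideal n I \<longleftrightarrow> (i, j) \<in> posroots n \<and> signature n I i \<inter> signature n I j \<noteq> {}"
proof
  assume ij: "(i, j) \<in> compl_ideal n I"
  then obtain v where v: "v \<in> max_compl n I" "root_le (i, j) v"
    using exists_max_compl_above by blast
  have "i < j"
    using ij by (auto simp: compl_ideal_def posroots_def)
  then have "v \<in> signature n I i \<inter> signature n I j"
    using v by (cases v) (auto simp: signature_def root_le_def)
  then show "(i, j) \<in> posroots n \<and> signature n I i \<inter> signature n I j \<noteq> {}"
    using ij by (auto simp: compl_ideal_def)
next
  assume ij: "(i, j) \<in> posroots n \<and> signature n I i \<inter> signature n I j \<noteq> {}"
  then obtain a b where ab: "(a, b) \<in> max_compl n I" "root_le (i, j) (a, b)"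
    by (auto simp: signature_def root_le_def)
  then have "(a, b) \<in> compl_ideal n I"
    using max_compl_subset by blast
  then show "(i, j) \<in> compl_ideal n I"
    using ideal ij ab(2) unfolding is_ideal_def compl_ideal_def by blast
qed

lemma signature_nonempty:
  assumes n: "n \<ge> 2" and full: "is_full n I" and w: "w \<in> {1..n}"
  shows "signature n I w \<noteq> {}"
proof -
  obtain u where u: "u \<in> compl_ideal n I" "fst u \<le> w" "w \<le> snd u"
  proof (cases "w < n")
    case True
    then have "(w, w + 1) \<in> compl_ideal n I"
      using full w unfolding is_full_def by auto
    then show ?thesis
      using that by fastforce
  next
    case False
    then have "w = n"
      using w by auto
    moreover have "n - 1 \<in> {1..<n}"
      using n by auto
    then have "(n - 1, n - 1 + 1) \<in> compl_ideal n I"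
      using full unfolding is_full_def by blast
    ultimately show ?thesis
      using that n by fastforce
  qed
  then obtain v where "v \<in> max_compl n I" "root_le u v"
    using exists_max_compl_above by blast
  then have "v \<in> signature n I w"
    using u by (cases v, cases u) (auto simp: signature_def root_le_def)
  then show ?thesis
    by blast
qed

lemma signature_between:
  assumes n: "n \<ge> 2" and full: "is_full n I"
    and m: "m \<in> {1..n}" and "m \<le> i" and "i \<le> j" and "j \<le> n"
    and eq: "signature n I m = signature n I j"
  shows "signature n I i = signature n I m"
proof
  show "signature n I m \<subseteq> signature n I i"
  proof
    fix v
    assume "v \<in> signature n I m"
    then have "v \<in> signature n I m \<inter> signature n I j"
      using eq by simp
    then show "v \<in> signature n I i"
      using \<open>m \<le> i\<close> \<open>i \<le> j\<close> by (auto simp: signature_def)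
  qed
next
  show "signature n I i \<subseteq> signature n I m"
  proof
    fix v
    assume v: "v \<in> signature n I i"
    obtain a b where ab: "v = (a, b)" "v \<in> max_compl n I" "a \<le> i" "i \<le> b"
      using v by (cases v) (auto simp: signature_def)
    obtain c d where cd: "(c, d) \<in> signature n I m"
      using signature_nonempty[OF n full m] by auto
    then have cd': "c \<le> m" "j \<le> d" "(c, d) \<in> max_compl n I"
      using eq by (auto simp: signature_def)
    show "v \<in> signature n I m"
    proof (cases "a \<le> m")
      case True
      then show ?thesis
        using ab \<open>m \<le> i\<close> by (auto simp: signature_def)
    next
      case False
      show ?thesis
      proof (cases "j \<le> b")
        case True
        then have "v \<in> signature n I j"
          using ab \<open>i \<le> j\<close> by (auto simp: signature_def)
        then show ?thesis
          using eq by simp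
      next
        case False
        \<comment> \<open>otherwise \<open>v\<close> lies strictly below the maximal root \<open>(c, d)\<close>\<close>
        then have "root_le v (c, d)"
          using ab cd' \<open>\<not> a \<le> m\<close> by (simp add: root_le_def)
        then have "(c, d) = v"
          using ab(2) cd'(3) max_compl_subset unfolding max_compl_def by blast
        then show ?thesis
          using cd by simp
      qed
    qed
  qed
qed

lemma num_components_compl_ideal:
  assumes full: "is_full n I" and n: "n \<ge> 1"
  shows "num_components {1..n} (compl_ideal n I) = 1"
proof -
  let ?R = "equiv_closure_on {1..n} (compl_ideal n I)"
  have eq: "equiv {1..n} ?R"
    by (rule equiv_equiv_closure_on) (auto simp: compl_ideal_def posroots_def)
  have connected: "(1, k) \<in> ?R" if "k \<in> {1..n}" for k
    using that
  proof (induction k)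
    case (Suc k)
    show ?case
    proof (cases "k = 0")
      case True
      then show ?thesis
        using n unfolding equiv_closure_on_def by auto
    next
      case False
      then have "k \<in> {1..<n}"
        using Suc.prems by auto
      then have "(1, k) \<in> ?R" and "(k, Suc k) \<in> ?R"
        using Suc.IH full unfolding is_full_def equiv_closure_on_def by auto
      then show ?thesis
        unfolding equiv_closure_on_def by (rule trancl_trans)
    qed
  qed simp
  have "{1..n} // ?R = (\<lambda>k. ?R `` {k}) ` {1..n}"
    by (auto simp: quotient_def)
  also have "\<dots> = (\<lambda>_. ?R `` {1}) ` {1..n}"
    using equiv_class_eq[OF eq connected] by (intro image_cong) simp_all
  also have "\<dots> = {?R `` {1}}"
    using n by auto
  finally show ?thesis
    by (simp add: num_components_def)
qed

definition same_signature :: "nat \<Rightarrow> (nat \<times> nat) set \<Rightarrow> (nat \<times> nat) set" where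
  "same_signature n I =
     {(w, w'). w \<in> {1..n} \<and> w' \<in> {1..n} \<and> signature n I w = signature n I w'}"

lemma equiv_same_signature: "equiv {1..n} (same_signature n I)"
  by (rule equivI) (auto simp: same_signature_def refl_on_def sym_def trans_def)

lemma blocks_eq_quotient: "blocks n I = {1..n} // same_signature n I"
proof -
  have "same_signature n I `` {w} = {w' \<in> {1..n}. signature n I w' = signature n I w}"
    if "w \<in> {1..n}" for w
    using that by (auto simp: same_signature_def)
  then show ?thesis
    unfolding blocks_def quotient_def by (auto intro!: image_cong)
qed

lemma finite_blocks: "finite (blocks n I)"
  unfolding blocks_def by simp

lemma block_subset: "B \<in> blocks n I \<Longrightarrow> B \<subseteq> {1..n}"
  unfolding blocks_def by auto

lemma finite_block: "B \<in> blocks n I \<Longrightarrow> finite B"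
  by (rule finite_subset[OF block_subset]) simp_all

lemma blocks_disjoint: "B \<in> blocks n I \<Longrightarrow> C \<in> blocks n I \<Longrightarrow> B \<noteq> C \<Longrightarrow> B \<inter> C = {}"
  using quotient_disj[OF equiv_same_signature, of B n I C] unfolding blocks_eq_quotient by blast

lemma exists_block: "w \<in> {1..n} \<Longrightarrow> \<exists>B\<in>blocks n I. w \<in> B"
  unfolding blocks_def by auto

lemma mem_block_iff:
  assumes "B \<in> blocks n I" and "w \<in> B"
  shows "w' \<in> B \<longleftrightarrow> w' \<in> {1..n} \<and> signature n I w' = signature n I w"
  using assms unfolding blocks_def by auto

lemma signature_eq_block_sig:
  assumes B: "B \<in> blocks n I" and w: "w \<in> B"
  shows "signature n I w = block_sig n I B"
proof -
  have "Min B \<in> B"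
    using finite_block[OF B] w by (intro Min_in) auto
  then have "signature n I (Min B) = signature n I w"
    using mem_block_iff[OF B w] by blast
  then show ?thesis
    unfolding block_sig_def by simp
qed

lemma Min_block_less:
  assumes n: "n \<ge> 2" and full: "is_full n I"
    and B: "B \<in> blocks n I" and C: "C \<in> blocks n I" and "B \<noteq> C"
    and i: "i \<in> B" and j: "j \<in> C" and "i < j"
  shows "Min B < Min C"
proof (rule ccontr)
  assume "\<not> Min B < Min C"
  then have "Min C \<le> i"
    using Min_le[OF finite_block[OF B] i] by linarith
  have mC: "Min C \<in> C"
    using finite_block[OF C] j by (intro Min_in) auto
  have jn: "j \<le> n" and mCn: "Min C \<in> {1..n}"
    using block_subset[OF C] mC j by auto
  have "signature n I (Min C) = signature n I j"
    using mem_block_iff[OF C mC] j by simp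
  \<comment> \<open>blocks are intervals, so \<open>i\<close> would lie in \<open>C\<close>\<close>
  then have "signature n I i = signature n I (Min C)"
    using \<open>i < j\<close> by (intro signature_between[OF n full mCn \<open>Min C \<le> i\<close> _ jn]) simp_all
  moreover have "i \<in> {1..n}"
    using block_subset[OF B] i by auto
  ultimately have "i \<in> C"
    using mem_block_iff[OF C mC] by blast
  then show False
    using blocks_disjoint[OF B C \<open>B \<noteq> C\<close>] i by auto
qed

section \<open>Monochromatic edges of the complement of an ideal\<close>

definition ordered_pairs :: "nat set \<Rightarrow> (nat \<times> nat) set" where
  "ordered_pairs X = {(i, j). i \<in> X \<and> j \<in> X \<and> i < j}"

lemma card_ordered_pairs:
  assumes "finite X"
  shows "card (ordered_pairs X) = card X choose 2"
proof -
  have "bij_betw (\<lambda>(i, j). {i, j}) (ordered_pairs X) {T. T \<subseteq> X \<and> card T = 2}"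
  proof (rule bij_betwI')
    fix u v
    assume "u \<in> ordered_pairs X" "v \<in> ordered_pairs X"
    then show "((case u of (i, j) \<Rightarrow> {i, j}) = (case v of (i, j) \<Rightarrow> {i, j})) = (u = v)"
      by (cases u, cases v) (auto simp: ordered_pairs_def doubleton_eq_iff)
  next
    fix u
    assume "u \<in> ordered_pairs X"
    then show "(case u of (i, j) \<Rightarrow> {i, j}) \<in> {T. T \<subseteq> X \<and> card T = 2}"
      by (cases u) (auto simp: ordered_pairs_def)
  next
    fix T
    assume "T \<in> {T. T \<subseteq> X \<and> card T = 2}"
    then obtain a b where ab: "T = {a, b}" "a \<noteq> b" "T \<subseteq> X"
      by (auto simp: card_2_iff)
    then have "(min a b, max a b) \<in> ordered_pairs X" and "T = {min a b, max a b}"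
      by (auto simp: ordered_pairs_def min_def max_def)
    then show "\<exists>u\<in>ordered_pairs X. T = (case u of (i, j) \<Rightarrow> {i, j})"
      by force
  qed
  then show ?thesis
    using n_subsets[OF assms] by (simp add: bij_betw_same_card)
qed

definition block_pairs :: "nat \<Rightarrow> (nat \<times> nat) set \<Rightarrow> nat set \<Rightarrow> (nat \<times> nat) set" where
  "block_pairs n I B = ordered_pairs B \<union> (\<Union>C\<in>later_blocks n I B. B \<times> C)"

lemma compl_ideal_subset_UN_block_pairs:
  assumes n: "n \<ge> 2" and ideal: "is_ideal n I" and full: "is_full n I"
  shows "compl_ideal n I \<subseteq> (\<Union>B\<in>blocks n I. block_pairs n I B)"
proof
  fix e
  assume e: "e \<in> compl_ideal n I"
  then obtain i j where ij: "e = (i, j)" "i \<in> {1..n}" "j \<in> {1..n}" "i < j"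
    by (auto simp: compl_ideal_def posroots_def)
  obtain B where B: "B \<in> blocks n I" "i \<in> B"
    using exists_block[OF ij(2)] by blast
  obtain C where C: "C \<in> blocks n I" "j \<in> C"
    using exists_block[OF ij(3)] by blast
  have "(i, j) \<in> block_pairs n I B"
  proof (cases "B = C")
    case True
    then show ?thesis
      using B C ij by (auto simp: block_pairs_def ordered_pairs_def)
  next
    case False
    have "signature n I i \<inter> signature n I j \<noteq> {}"
      using compl_ideal_iff_signatures_meet[OF ideal] e ij(1) by blast
    then have "C \<in> later_blocks n I B"
      using Min_block_less[OF n full B(1) C(1) False B(2) C(2) ij(4)] C
        signature_eq_block_sig[OF B] signature_eq_block_sig[OF C] by (auto simp: later_blocks_def)
    then show ?thesis
      using B C by (auto simp: block_pairs_def)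
  qed
  then show "e \<in> (\<Union>B\<in>blocks n I. block_pairs n I B)"
    using B ij(1) by blast
qed

lemma UN_block_pairs_subset_compl_ideal:
  assumes n: "n \<ge> 2" and ideal: "is_ideal n I" and full: "is_full n I"
  shows "(\<Union>B\<in>blocks n I. block_pairs n I B) \<subseteq> compl_ideal n I"
proof
  fix e
  assume "e \<in> (\<Union>B\<in>blocks n I. block_pairs n I B)"
  then obtain B i j where B: "B \<in> blocks n I" and e: "e = (i, j)" and i: "i \<in> B"
    and ij: "(i, j) \<in> block_pairs n I B"
    by (auto simp: block_pairs_def ordered_pairs_def)
  obtain C where C: "C \<in> blocks n I" "j \<in> C" and "i < j"
    and meet: "signature n I i \<inter> signature n I j \<noteq> {}"
  proof (cases "(i, j) \<in> ordered_pairs B")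
    case True
    then have "i < j" "j \<in> B"
      by (auto simp: ordered_pairs_def)
    moreover have "signature n I i \<noteq> {}"
      using signature_nonempty[OF n full] block_subset[OF B] i by blast
    ultimately show ?thesis
      using that[OF B] signature_eq_block_sig[OF B] i by auto
  next
    case False
    then obtain C where C: "C \<in> later_blocks n I B" "j \<in> C"
      using ij by (auto simp: block_pairs_def)
    then have Cb: "C \<in> blocks n I" and less: "Min B < Min C" and "B \<noteq> C"
      by (auto simp: later_blocks_def)
    have "i \<noteq> j"
      using blocks_disjoint[OF B Cb \<open>B \<noteq> C\<close>] i C(2) by auto
    moreover have "\<not> j < i"
      using Min_block_less[OF n full Cb B \<open>B \<noteq> C\<close>[symmetric] C(2) i] less by auto
    moreover have "signature n I i \<inter> signature n I j \<noteq> {}"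
      using C signature_eq_block_sig[OF B i] signature_eq_block_sig[OF Cb C(2)]
      by (auto simp: later_blocks_def)
    ultimately show ?thesis
      using that[OF Cb C(2)] by simp
  qed
  have "i \<in> {1..n}" "j \<in> {1..n}"
    using block_subset[OF B] block_subset[OF C(1)] i C(2) by auto
  then show "e \<in> compl_ideal n I"
    using compl_ideal_iff_signatures_meet[OF ideal] e \<open>i < j\<close> meet by (simp add: posroots_def)
qed

lemma compl_ideal_eq_UN_block_pairs:
  assumes "n \<ge> 2" and "is_ideal n I" and "is_full n I"
  shows "compl_ideal n I = (\<Union>B\<in>blocks n I. block_pairs n I B)"
  using compl_ideal_subset_UN_block_pairs[OF assms] UN_block_pairs_subset_compl_ideal[OF assms]
  by (rule subset_antisym)

lemma monochromatic_Un: "monochromatic f (A \<union> B) = monochromatic f A \<union> monochromatic f B"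
  by (auto simp: monochromatic_def)

lemma monochromatic_UN: "monochromatic f (\<Union>x\<in>K. A x) = (\<Union>x\<in>K. monochromatic f (A x))"
  by (auto simp: monochromatic_def)

lemma finite_ordered_pairs: "finite X \<Longrightarrow> finite (ordered_pairs X)"
  by (rule finite_subset[of _ "X \<times> X"]) (auto simp: ordered_pairs_def)

lemma card_monochromatic_ordered_pairs:
  assumes X: "finite X" and T: "finite T" and f: "f ` X \<subseteq> T"
  shows "card (monochromatic f (ordered_pairs X)) = (\<Sum>s\<in>T. card {w \<in> X. f w = s} choose 2)"
proof -
  have "monochromatic f (ordered_pairs X) = (\<Union>s\<in>T. ordered_pairs {w \<in> X. f w = s})"
    using f by (auto simp: monochromatic_def ordered_pairs_def)
  also have "card \<dots> = (\<Sum>s\<in>T. card (ordered_pairs {w \<in> X. f w = s}))"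
  proof (rule card_UN_disjoint[OF T])
    show "\<forall>s\<in>T. finite (ordered_pairs {w \<in> X. f w = s})"
      using X by (simp add: finite_ordered_pairs)
  qed (auto simp: ordered_pairs_def)
  finally show ?thesis
    using X by (simp add: card_ordered_pairs)
qed

lemma card_monochromatic_Times:
  assumes X: "finite X" and Y: "finite Y" and T: "finite T" and f: "f ` X \<subseteq> T"
  shows "card (monochromatic f (X \<times> Y)) = (\<Sum>s\<in>T. card {w \<in> X. f w = s} * card {w \<in> Y. f w = s})"
proof -
  have "monochromatic f (X \<times> Y) = (\<Union>s\<in>T. {w \<in> X. f w = s} \<times> {w \<in> Y. f w = s})"
    using f by (auto simp: monochromatic_def)
  also have "card \<dots> = (\<Sum>s\<in>T. card ({w \<in> X. f w = s} \<times> {w \<in> Y. f w = s}))"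
    using X Y T by (intro card_UN_disjoint) auto
  finally show ?thesis
    by (simp add: card_cartesian_product)
qed

lemma card_monochromatic_block_pairs:
  fixes f :: "nat \<Rightarrow> nat"
  assumes B: "B \<in> blocks n I" and f: "f ` {1..n} \<subseteq> {1..p}"
  shows "card (monochromatic f (block_pairs n I B)) = (\<Sum>s\<in>{1..p}.
    (card {w \<in> B. f w = s} choose 2) + card {w \<in> B. f w = s} * (\<Sum>C\<in>later_blocks n I B. card {w \<in> C. f w = s}))"
proof -
  let ?L = "later_blocks n I B"
  have L: "?L \<subseteq> blocks n I" "finite ?L"
    using finite_blocks by (auto simp: later_blocks_def intro: finite_subset)
  have fB: "f ` B \<subseteq> {1..p}"
    using image_mono[OF block_subset[OF B]] f by (rule order_trans)
  have finite_Times: "finite (monochromatic f (B \<times> C))" if "C \<in> ?L" for C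
    using L finite_block B that by (intro finite_monochromatic finite_cartesian_product) auto
  have disjoint_later: "B \<inter> C = {}" if "C \<in> ?L" for C
    using blocks_disjoint[OF B] that by (auto simp: later_blocks_def)
  have "card (monochromatic f (block_pairs n I B))
      = card (monochromatic f (ordered_pairs B)) + card (\<Union>C\<in>?L. monochromatic f (B \<times> C))"
    unfolding block_pairs_def monochromatic_Un monochromatic_UN
  proof (rule card_Un_disjoint)
    show "finite (monochromatic f (ordered_pairs B))"
      using finite_ordered_pairs[OF finite_block[OF B]] by (rule finite_monochromatic)
    show "finite (\<Union>C\<in>?L. monochromatic f (B \<times> C))"
      using L finite_Times by blast
    show "monochromatic f (ordered_pairs B) \<inter> (\<Union>C\<in>?L. monochromatic f (B \<times> C)) = {}"
      using disjoint_later by (fastforce simp: monochromatic_def ordered_pairs_def)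
  qed
  also have "card (\<Union>C\<in>?L. monochromatic f (B \<times> C)) = (\<Sum>C\<in>?L. card (monochromatic f (B \<times> C)))"
  proof (rule card_UN_disjoint)
    show "\<forall>C\<in>?L. finite (monochromatic f (B \<times> C))"
      using finite_Times by blast
    show "\<forall>C\<in>?L. \<forall>C'\<in>?L. C \<noteq> C' \<longrightarrow> monochromatic f (B \<times> C) \<inter> monochromatic f (B \<times> C') = {}"
      using L blocks_disjoint by (fastforce simp: monochromatic_def)
  qed (use L in simp)
  also have "\<dots> = (\<Sum>C\<in>?L. \<Sum>s\<in>{1..p}. card {w \<in> B. f w = s} * card {w \<in> C. f w = s})"
    using L fB finite_block B by (intro sum.cong refl card_monochromatic_Times) auto
  finally show ?thesis
    using card_monochromatic_ordered_pairs[OF finite_block[OF B] _ fB]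
    by (simp add: sum.distrib sum_distrib_left sum.swap[of _ ?L])
qed

lemma card_monochromatic_compl_ideal:
  fixes f :: "nat \<Rightarrow> nat"
  assumes n: "n \<ge> 2" and ideal: "is_ideal n I" and full: "is_full n I"
    and f: "f ` {1..n} \<subseteq> {1..p}"
  shows "card (monochromatic f (compl_ideal n I)) = (\<Sum>B\<in>blocks n I. \<Sum>s\<in>{1..p}.
    (card {w \<in> B. f w = s} choose 2) + card {w \<in> B. f w = s} * (\<Sum>C\<in>later_blocks n I B. card {w \<in> C. f w = s}))"
proof -
  have "card (monochromatic f (compl_ideal n I))
      = (\<Sum>B\<in>blocks n I. card (monochromatic f (block_pairs n I B)))"
    unfolding compl_ideal_eq_UN_block_pairs[OF n ideal full] monochromatic_UN
  proof (rule card_UN_disjoint[OF finite_blocks])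
    show "\<forall>B\<in>blocks n I. finite (monochromatic f (block_pairs n I B))"
      using finite_compl_ideal[of n I] compl_ideal_eq_UN_block_pairs[OF n ideal full]
      by (auto intro: finite_monochromatic finite_subset)
    \<comment> \<open>the first component of a pair in \<open>block_pairs n I B\<close> lies in \<open>B\<close>\<close>
    show "\<forall>B\<in>blocks n I. \<forall>C\<in>blocks n I. B \<noteq> C \<longrightarrow>
        monochromatic f (block_pairs n I B) \<inter> monochromatic f (block_pairs n I C) = {}"
      using blocks_disjoint
      by (fastforce simp: monochromatic_def block_pairs_def ordered_pairs_def)
  qed
  then show ?thesis
    using card_monochromatic_block_pairs[OF _ f] by simp
qed

section \<open>Grouping colorings by their fiber sizes\<close>

definition fiber_counts :: "nat \<Rightarrow> (nat \<times> nat) set \<Rightarrow> nat \<Rightarrow> (nat \<Rightarrow> nat) \<Rightarrow> nat set \<Rightarrow> nat \<Rightarrow> nat" where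
  "fiber_counts n I p f = (\<lambda>B\<in>blocks n I. \<lambda>s\<in>{1..p}. card {w \<in> B. f w = s})"

lemma card_fibers:
  fixes p :: nat
  assumes "finite B" and "f ` B \<subseteq> {1..p}"
  shows "(\<Sum>s\<in>{1..p}. card {w \<in> B. f w = s}) = card B"
proof -
  have "(\<Sum>s\<in>{1..p}. \<Sum>w\<in>{w \<in> B. f w = s}. 1) = (\<Sum>w\<in>B. 1 :: nat)"
    by (rule sum.group) (use assms in auto)
  then show ?thesis
    by simp
qed

lemma fiber_counts_in_families:
  assumes f: "f \<in> {1..n} \<rightarrow>\<^sub>E {1..p}"
  shows "fiber_counts n I p f \<in> families n I p"
  unfolding families_def fiber_counts_def
proof (intro restrict_PiE_iff[THEN iffD2] ballI)
  fix B
  assume B: "B \<in> blocks n I"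
  have "(\<lambda>s\<in>{1..p}. card {w \<in> B. f w = s}) \<in> {1..p} \<rightarrow>\<^sub>E {0..card B}"
    using finite_block[OF B] by (auto intro: card_mono)
  moreover have "f ` B \<subseteq> {1..p}"
    using f block_subset[OF B] by auto
  then have "(\<Sum>s\<in>{1..p}. card {w \<in> B. f w = s}) = card B"
    using card_fibers[OF finite_block[OF B]] by simp
  ultimately show "(\<lambda>s\<in>{1..p}. card {w \<in> B. f w = s})
      \<in> {g \<in> {1..p} \<rightarrow>\<^sub>E {0..card B}. (\<Sum>s\<in>{1..p}. g s) = card B}"
    by simp
qed

lemma card_monochromatic_eq_exponent:
  assumes n: "n \<ge> 2" and ideal: "is_ideal n I" and full: "is_full n I"
    and f: "f \<in> {1..n} \<rightarrow>\<^sub>E {1..p}"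
  shows "card (monochromatic f (compl_ideal n I)) = exponent n I p (fiber_counts n I p f)"
proof -
  have "f ` {1..n} \<subseteq> {1..p}"
    using f by auto
  moreover have "fiber_counts n I p f C s = card {w \<in> C. f w = s}"
    if "C \<in> blocks n I" "s \<in> {1..p}" for C s
    using that by (simp add: fiber_counts_def)
  ultimately show ?thesis
    unfolding exponent_def using card_monochromatic_compl_ideal[OF n ideal full]
    by (auto simp: later_blocks_def intro!: sum.cong)
qed

lemma restrict_restrict_eq_iff:
  assumes "a \<in> extensional K" and "\<forall>x\<in>K. a x \<in> extensional S"
  shows "(\<lambda>x\<in>K. \<lambda>y\<in>S. c x y) = a \<longleftrightarrow> (\<forall>x\<in>K. \<forall>y\<in>S. c x y = a x y)"
  using assms by (auto simp: fun_eq_iff extensional_def)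

lemma card_fiber_counts_eq:
  assumes a: "a \<in> families n I p"
  shows "card {f \<in> {1..n} \<rightarrow>\<^sub>E {1..p}. fiber_counts n I p f = a}
    = (\<Prod>B\<in>blocks n I. multinomial p (card B) (a B))"
proof -
  have aB: "a B \<in> {1..p} \<rightarrow>\<^sub>E {0..card B}" "(\<Sum>s\<in>{1..p}. a B s) = card B" if "B \<in> blocks n I" for B
    using a that by (auto simp: families_def)
  have "a \<in> extensional (blocks n I)" and "\<forall>B\<in>blocks n I. a B \<in> extensional {1..p}"
    using a aB(1) by (auto simp: families_def PiE_def)
  then have "fiber_counts n I p f = a \<longleftrightarrow>
      (\<forall>B\<in>blocks n I. \<forall>s\<in>{1..p}. card {w \<in> B. f w = s} = a B s)" for f :: "nat \<Rightarrow> nat"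
    unfolding fiber_counts_def by (rule restrict_restrict_eq_iff)
  moreover have "{w \<in> B. restrict f B w = s} = {w \<in> B. f w = s}" for f :: "nat \<Rightarrow> nat" and B s
    by auto
  ultimately have "fiber_counts n I p f = a \<longleftrightarrow>
      (\<forall>B\<in>blocks n I. \<forall>s\<in>{1..p}. card {w \<in> B. restrict f B w = s} = a B s)" for f :: "nat \<Rightarrow> nat"
    by presburger
  then have "card {f \<in> {1..n} \<rightarrow>\<^sub>E {1..p}. fiber_counts n I p f = a}
      = (\<Prod>B\<in>blocks n I. card (colorings_with_fiber_sizes B p (a B)))"
    using card_PiE_restrict_quotient[OF equiv_same_signature[of n I] finite_atLeastAtMost,
        where T = "{1..p}" and P = "\<lambda>B g. \<forall>s\<in>{1..p}. card {w \<in> B. g w = s} = a B s"]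
    by (simp add: blocks_eq_quotient colorings_with_fiber_sizes_def)
  also have "\<dots> = (\<Prod>B\<in>blocks n I. multinomial p (card B) (a B))"
    using aB finite_block by (simp add: multinomial_eq_card_colorings_with_fiber_sizes)
  finally show ?thesis .
qed

lemma sum_colorings_eq_sum_families:
  fixes t :: real
  assumes n: "n \<ge> 2" and ideal: "is_ideal n I" and full: "is_full n I"
  shows "(\<Sum>f\<in>{1..n} \<rightarrow>\<^sub>E {1..p}. t ^ card (monochromatic f (compl_ideal n I)))
    = (\<Sum>a\<in>families n I p. real (\<Prod>B\<in>blocks n I. multinomial p (card B) (a B)) * t ^ exponent n I p a)"
proof -
  let ?W = "{1..n} \<rightarrow>\<^sub>E {1..p}"
  have "finite (families n I p)"
    unfolding families_def by (intro finite_PiE finite_blocks) (simp add: finite_PiE)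
  then have "(\<Sum>f\<in>?W. t ^ exponent n I p (fiber_counts n I p f))
      = (\<Sum>a\<in>families n I p. \<Sum>f\<in>{f \<in> ?W. fiber_counts n I p f = a}. t ^ exponent n I p (fiber_counts n I p f))"
    by (intro sum.group[symmetric]) (auto simp: finite_PiE fiber_counts_in_families)
  also have "\<dots> = (\<Sum>a\<in>families n I p. real (\<Prod>B\<in>blocks n I. multinomial p (card B) (a B)) * t ^ exponent n I p a)"
  proof (intro sum.cong refl)
    fix a
    assume "a \<in> families n I p"
    then show "(\<Sum>f\<in>{f \<in> ?W. fiber_counts n I p f = a}. t ^ exponent n I p (fiber_counts n I p f))
        = real (\<Prod>B\<in>blocks n I. multinomial p (card B) (a B)) * t ^ exponent n I p a"
      using card_fiber_counts_eq by simp
  qed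
  finally show ?thesis
    using card_monochromatic_eq_exponent[OF n ideal full] by simp
qed

theorem mainTheorem11:
  fixes n p :: nat and I :: "(nat \<times> nat) set" and t :: real
  assumes "n \<ge> 2"
    and "is_ideal n I"
    and "is_full n I"
    and "prime p" and "odd p"
  shows "coboundary n (arrangement_of n I) (real p) t =
    (1 / real p) * (\<Sum>a\<in>families n I p.
       real (\<Prod>B\<in>blocks n I. multinomial p (card B) (a B)) * t ^ exponent n I p a)"
proof -
  have "compl_ideal n I \<subseteq> posroots n"
    by (simp add: compl_ideal_def)
  moreover have "num_components {1..n} (compl_ideal n I) = 1"
    using num_components_compl_ideal assms(1,3) by simp
  moreover have "p \<ge> 1"
    using prime_ge_1_nat assms(4) by blast
  ultimately have "coboundary n (arrangement_of n I) (real p) t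
      = (1 / real p) * (\<Sum>f\<in>{1..n} \<rightarrow>\<^sub>E {1..p}. t ^ card (monochromatic f (compl_ideal n I)))"
    unfolding arrangement_of_def by (rule coboundary_root_hyperplanes)
  then show ?thesis
    unfolding sum_colorings_eq_sum_families[OF assms(1-3)] .
qed

end
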